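(* Consider plain SGD (no momentum) with scalar learning rate $\lambda>0$ and batch size $S$ on $L_2$-regularized linear regression in the limit $N\to\infty$, with $[A,\Gamma]=0$. Let $K:=A+\Gamma$, $U:=\mathbf{u}\mathbf{u}^{\mathrm T}$, $G:=2I_D-\lambda\left(K+\frac1SK^{-1}A^2\right)$, $\kappa:=\frac{\mathrm{Tr}[A^2K^{-1}G^{-1}]}{1-\frac\lambda S\mathrm{Tr}[A^2K^{-1}G^{-1}]}$, $r:=\frac{\mathrm{Tr}[A^3K^{-3}\Gamma^2G^{-1}U]}{1-\frac\lambda S\mathrm{Tr}[A^2K^{-1}G^{-1}]}$ (with $K,G$ invertible and the denominator nonzero). Then the expected test loss $L_{\rm test}:=\frac12\mathbb{E}_{\mathbf{w}}[(\mathbf{w}-\mathbf{u})^{\mathrm T}A(\mathbf{w}-\mathbf{u})]$ is $$L_{\rm test}=\frac{\lambda}{2S}\left(\mathrm{Tr}[AK^{-2}\Gamma^2U]\kappa+r\right)+\frac12\mathrm{Tr}[AK^{-2}\Gamma^2U].$$ Moreover, if $A$, $\Gamma$ and $U$ pairwise commute, then $$\Sigma=\frac\lambda S\mathrm{Tr}[AK^{-2}\Gamma^2U]\left(1+\frac{\lambda\kappa}{S}\right)AK^{-1}G^{-1}+\frac\lambda S\left(A^2K^{-2}\Gamma^2U+\frac{\lambda r}{S}A\right)K^{-1}G^{-1}.$$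
   Context: Data: $x_i\in\mathbb{R}^D$ i.i.d. $\mathcal N(0,A)$, $A$ symmetric positive definite; labels $y_i=\mathbf{u}^{\mathrm T}x_i$; $\Gamma$ symmetric. Loss $L_\Gamma(\mathbf{w})=\frac{1}{2N}\sum_i[(\mathbf{w}-\mathbf{u})^{\mathrm T}x_i]^2+\frac12\mathbf{w}^{\mathrm T}\Gamma\mathbf{w}$, whose Hessian is $K=A+\Gamma$ as $N\to\infty$. SGD: $\mathbf{w}_t=\mathbf{w}_{t-1}-\frac\lambda S\sum_{i\in B_t}\nabla\ell_i(\mathbf{w}_{t-1})$. The stationary distribution has mean $\mathbf{w}^*=K^{-1}A\mathbf{u}$ and covariance $\Sigma:=\mathbb{E}_{\mathbf{w}}[(\mathbf{w}-\mathbf{w}^* )(\mathbf{w}-\mathbf{w}^* )^{\mathrm T}]$, determined by the stationarity equation $\lambda(K\Sigma+\Sigma K)-\lambda^2K\Sigma K=\lambda^2C$, where the averaged minibatch noise covariance is $C=\frac1S\big(A\Sigma A+\mathrm{Tr}[A\Sigma]A+\mathrm{Tr}[AK^{-2}\Gamma^2U]A+AK^{-1}\Gamma U\Gamma K^{-1}A\big)$. *)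

theory Defs
  imports "HOL-Analysis.Analysis" "HOL-Probability.Probability"
begin

definition outer :: "real^'n \<Rightarrow> real^'n \<Rightarrow> real^'n^'n" where
  "outer u v = (\<chi> i j. u$i * v$j)"

text \<open>Averaged minibatch noise covariance C (N to infinity limit), as a function of Sigma.
  Arguments: A, Gamma, u, batch size S, Sigma.\<close>
definition noise_cov :: "real^'n^'n \<Rightarrow> real^'n^'n \<Rightarrow> real^'n \<Rightarrow> nat \<Rightarrow> real^'n^'n \<Rightarrow> real^'n^'n" where
  "noise_cov A \<Gamma> u S \<Sigma> =
     (let K = A + \<Gamma>; Ki = matrix_inv K; U = outer u u in
      (1 / real S) *\<^sub>R
        (A ** \<Sigma> ** A + trace (A ** \<Sigma>) *\<^sub>R A
         + trace (A ** Ki ** Ki ** \<Gamma> ** \<Gamma> ** U) *\<^sub>R A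
         + A ** Ki ** \<Gamma> ** U ** \<Gamma> ** Ki ** A))"

definition stationary_eq :: "real^'n^'n \<Rightarrow> real^'n^'n \<Rightarrow> real^'n \<Rightarrow> real \<Rightarrow> nat \<Rightarrow> real^'n^'n \<Rightarrow> bool" where
  "stationary_eq A \<Gamma> u lr S \<Sigma> \<longleftrightarrow>
     (let K = A + \<Gamma> in
      lr *\<^sub>R (K ** \<Sigma> + \<Sigma> ** K) - lr\<^sup>2 *\<^sub>R (K ** \<Sigma> ** K)
        = lr\<^sup>2 *\<^sub>R noise_cov A \<Gamma> u S \<Sigma>)"

end

theory Submission
  imports Defs
begin

(* Write L X = K X + X K - lr K X K - (lr/S) A X A.  The stationarity equation says
   L Sigma = (lr/S) ((Tr[A Sigma] + t) A + W) with W = A K^-1 Gamma U Gamma K^-1 A.  On matrices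
   commuting with A and K one has L X = X K G, so M = A K^-1 G^-1 solves L M = A.  As L is
   self-adjoint for the trace pairing, Tr[A Sigma] = Tr[M (L Sigma)], a linear equation for
   Tr[A Sigma] whose solution is (lr/S)(t kappa + r); the test loss is half of Tr[A Sigma] plus
   the bias t of the mean.  If U commutes with A and Gamma as well, (lr/S)((Tr[A Sigma] + t) A + W)
   K^-1 G^-1 is a symmetric solution of the stationarity equation, hence equals Sigma. *)

lemma matrix_add_rdistrib: "((A::'a::semiring_1^'n^'m) + B) ** C = A ** C + B ** C"
  by (simp add: matrix_matrix_mult_def vec_eq_iff sum.distrib distrib_right)

lemma matrix_diff_ldistrib: "(A::'a::ring_1^'n^'m) ** (B - C) = A ** B - A ** C"
  by (simp add: matrix_matrix_mult_def vec_eq_iff sum_subtractf right_diff_distrib)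

lemma matrix_diff_rdistrib: "((A::'a::ring_1^'n^'m) - B) ** C = A ** C - B ** C"
  by (simp add: matrix_matrix_mult_def vec_eq_iff sum_subtractf left_diff_distrib)

lemma matrix_scaleR_right: "(A::'a::real_algebra_1^'n^'m) ** (c *\<^sub>R B) = c *\<^sub>R (A ** B)"
  by (simp add: matrix_scalar_ac scalar_matrix_assoc)

lemmas matrix_mult_distribs = matrix_add_ldistrib matrix_add_rdistrib
  matrix_diff_ldistrib matrix_diff_rdistrib matrix_scaleR_right scalar_matrix_assoc[symmetric]

lemma transpose_add: "transpose ((A::'a::plus^'n^'m) + B) = transpose A + transpose B"
  by (simp add: transpose_def vec_eq_iff)

lemma transpose_diff: "transpose ((A::'a::minus^'n^'m) - B) = transpose A - transpose B"
  by (simp add: transpose_def vec_eq_iff)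

lemma trace_scaleR: "trace (c *\<^sub>R (A::'a::real_algebra_1^'n^'n)) = c *\<^sub>R trace A"
  by (simp add: trace_def scaleR_sum_right)

lemma trace_mult_outer: "trace (X ** outer u v) = v \<bullet> (X *v u)"
  by (simp add: trace_def matrix_matrix_mult_def outer_def inner_vec_def matrix_vector_mult_def
      sum_distrib_left mult_ac)

lemma inner_matrix_vector_transpose: "(B *v x) \<bullet> y = x \<bullet> (transpose B *v (y::real^'n))"
  by (metis dot_lmul_matrix vector_transpose_matrix)

lemma transpose_outer: "transpose (outer u v) = outer v u"
  by (simp add: outer_def transpose_def vec_eq_iff mult.commute)

lemma matrix_inv_right:
  fixes A :: "'a::semiring_1^'n^'n"
  assumes "invertible A"
  shows "A ** matrix_inv A = mat 1"
  using someI_ex[OF assms[unfolded invertible_def]] by (simp add: matrix_inv_def)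

lemma matrix_inv_left:
  fixes A :: "'a::semiring_1^'n^'n"
  assumes "invertible A"
  shows "matrix_inv A ** A = mat 1"
  using someI_ex[OF assms[unfolded invertible_def]] by (simp add: matrix_inv_def)

lemma matrix_inv_unique:
  fixes A B :: "'a::field^'n^'n"
  assumes "A ** B = mat 1"
  shows "matrix_inv A = B"
proof -
  have "invertible A"
    using assms invertible_right_inverse by blast
  have "matrix_inv A = matrix_inv A ** (A ** B)"
    by (simp add: assms)
  also have "\<dots> = B"
    by (simp add: matrix_mul_assoc matrix_inv_left \<open>invertible A\<close>)
  finally show ?thesis .
qed

lemma matrix_inv_transpose:
  fixes A :: "'a::field^'n^'n"
  assumes "invertible A"
  shows "matrix_inv (transpose A) = transpose (matrix_inv A)"
  by (rule matrix_inv_unique)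
    (simp add: assms matrix_inv_left flip: matrix_transpose_mul)

lemma matrix_inv_commute:
  fixes A B :: "'a::semiring_1^'n^'n"
  assumes "invertible B" and "A ** B = B ** A"
  shows "A ** matrix_inv B = matrix_inv B ** A"
proof -
  have "A ** matrix_inv B = matrix_inv B ** B ** A ** matrix_inv B"
    by (simp add: matrix_inv_left assms(1))
  also have "\<dots> = matrix_inv B ** A ** (B ** matrix_inv B)"
    by (metis assms(2) matrix_mul_assoc)
  also have "\<dots> = matrix_inv B ** A"
    by (simp add: matrix_inv_right assms(1))
  finally show ?thesis .
qed

definition matrix_commute :: "'a::semiring_1^'n^'n \<Rightarrow> 'a^'n^'n \<Rightarrow> bool" where
  "matrix_commute A B \<longleftrightarrow> A ** B = B ** A"

lemma matrix_commute_sym: "matrix_commute A B \<Longrightarrow> matrix_commute B A"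
  by (simp add: matrix_commute_def)

lemma matrix_commute_refl: "matrix_commute A A"
  by (simp add: matrix_commute_def)

lemma matrix_commute_mat_one: "matrix_commute A (mat 1)"
  by (simp add: matrix_commute_def)

lemma matrix_commute_add:
  "matrix_commute A B \<Longrightarrow> matrix_commute A C \<Longrightarrow> matrix_commute A (B + C)"
  by (simp add: matrix_commute_def matrix_add_ldistrib matrix_add_rdistrib)

lemma matrix_commute_diff:
  fixes A :: "'a::ring_1^'n^'n"
  shows "matrix_commute A B \<Longrightarrow> matrix_commute A C \<Longrightarrow> matrix_commute A (B - C)"
  by (simp add: matrix_commute_def matrix_diff_ldistrib matrix_diff_rdistrib)

lemma matrix_commute_scaleR:
  fixes A :: "'a::real_algebra_1^'n^'n"
  shows "matrix_commute A B \<Longrightarrow> matrix_commute A (c *\<^sub>R B)"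
  by (simp add: matrix_commute_def matrix_scaleR_right scalar_matrix_assoc)

lemma matrix_commute_mult:
  "matrix_commute A B \<Longrightarrow> matrix_commute A C \<Longrightarrow> matrix_commute A (B ** C)"
  by (metis matrix_commute_def matrix_mul_assoc)

lemma matrix_commute_matrix_inv:
  "invertible B \<Longrightarrow> matrix_commute A B \<Longrightarrow> matrix_commute A (matrix_inv B)"
  by (simp add: matrix_commute_def matrix_inv_commute)

lemmas matrix_commute_intros = matrix_commute_refl matrix_commute_mat_one matrix_commute_add
  matrix_commute_diff matrix_commute_scaleR matrix_commute_mult matrix_commute_matrix_inv

lemma matrix_commute_rewrites:
  assumes "matrix_commute X Y"
  shows "Y ** X = X ** Y" "Z ** Y ** X = Z ** X ** Y"
  using assms by (simp_all add: matrix_commute_def flip: matrix_mul_assoc)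

lemma symmetric_mult_commute:
  fixes A B :: "'a::comm_semiring_1^'n^'n"
  assumes "matrix_commute A B" "transpose A = A" "transpose B = B"
  shows "transpose (A ** B) = A ** B"
  using assms by (simp add: matrix_transpose_mul matrix_commute_def)

definition sgd_lyapunov ::
    "real^'n^'n \<Rightarrow> real^'n^'n \<Rightarrow> real \<Rightarrow> nat \<Rightarrow> real^'n^'n \<Rightarrow> real^'n^'n" where
  "sgd_lyapunov K A lr S X =
    K ** X + X ** K - lr *\<^sub>R (K ** X ** K) - (lr / real S) *\<^sub>R (A ** X ** A)"

definition sgd_lyapunov_factor ::
    "real^'n^'n \<Rightarrow> real^'n^'n \<Rightarrow> real \<Rightarrow> nat \<Rightarrow> real^'n^'n" where
  "sgd_lyapunov_factor K A lr S =
    2 *\<^sub>R mat 1 - lr *\<^sub>R (K + (1 / real S) *\<^sub>R (matrix_inv K ** A ** A))"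

lemma trace_sgd_lyapunov_adjoint:
  "trace (sgd_lyapunov K A lr S M ** X) = trace (M ** sgd_lyapunov K A lr S X)"
proof -
  have "trace (M ** X ** K) = trace (K ** M ** X)"
    by (metis trace_mul_sym matrix_mul_assoc)
  moreover have "trace (K ** M ** K ** X) = trace (M ** K ** X ** K)"
    by (metis trace_mul_sym matrix_mul_assoc)
  moreover have "trace (A ** M ** A ** X) = trace (M ** A ** X ** A)"
    by (metis trace_mul_sym matrix_mul_assoc)
  ultimately show ?thesis
    by (simp add: sgd_lyapunov_def matrix_mult_distribs trace_add trace_sub trace_scaleR
        matrix_mul_assoc)
qed

lemma sgd_lyapunov_commuting:
  assumes "invertible K" "matrix_commute X K" "matrix_commute X A"
  shows "sgd_lyapunov K A lr S X = X ** K ** sgd_lyapunov_factor K A lr S"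
proof -
  have "K ** X = X ** K" "A ** X ** A = X ** A ** A"
    using assms(2,3) by (simp_all add: matrix_commute_def flip: matrix_mul_assoc)
  moreover have "X ** K ** (matrix_inv K ** A ** A) = X ** A ** A"
    by (metis assms(1) matrix_inv_right matrix_mul_assoc matrix_mul_rid)
  ultimately show ?thesis
    by (simp add: sgd_lyapunov_def sgd_lyapunov_factor_def matrix_mult_distribs
        matrix_mul_assoc scaleR_diff_right scaleR_add_right flip: scaleR_2)
qed

lemma sgd_lyapunov_commuting_solution:
  fixes K A Y :: "real^'n^'n" and lr :: real and S :: nat
  defines "G \<equiv> sgd_lyapunov_factor K A lr S"
  assumes K: "invertible K" and G: "invertible G"
    and AK: "matrix_commute A K" and YK: "matrix_commute Y K" and YA: "matrix_commute Y A"
  shows "sgd_lyapunov K A lr S (Y ** matrix_inv K ** matrix_inv G) = Y"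
proof -
  note KA = matrix_commute_sym[OF AK]
  have KG: "matrix_commute K G" and AG: "matrix_commute A G"
    unfolding G_def sgd_lyapunov_factor_def by (intro matrix_commute_intros K KA AK)+
  have "matrix_commute K (Y ** matrix_inv K ** matrix_inv G)"
    "matrix_commute A (Y ** matrix_inv K ** matrix_inv G)"
    by (intro matrix_commute_intros matrix_commute_sym[OF YK] matrix_commute_sym[OF YA]
        K G KG AG AK)+
  then have "sgd_lyapunov K A lr S (Y ** matrix_inv K ** matrix_inv G)
      = Y ** matrix_inv K ** (matrix_inv G ** K) ** G"
    by (simp add: sgd_lyapunov_commuting K matrix_commute_sym G_def matrix_mul_assoc)
  also have "matrix_inv G ** K = K ** matrix_inv G"
    using matrix_commute_matrix_inv[OF G KG] by (simp add: matrix_commute_def)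
  also have "Y ** matrix_inv K ** (K ** matrix_inv G) ** G
      = Y ** (matrix_inv K ** K) ** (matrix_inv G ** G)"
    by (simp add: matrix_mul_assoc)
  also have "\<dots> = Y"
    by (simp add: matrix_inv_left K G)
  finally show ?thesis .
qed

lemma stationary_eq_iff_sgd_lyapunov:
  fixes A \<Gamma> X :: "real^'n^'n"
  defines "Ki \<equiv> matrix_inv (A + \<Gamma>)"
  assumes "lr \<noteq> 0"
  shows "stationary_eq A \<Gamma> u lr S X \<longleftrightarrow>
    sgd_lyapunov (A + \<Gamma>) A lr S X = (lr / real S) *\<^sub>R
      ((trace (A ** X) + trace (A ** Ki ** Ki ** \<Gamma> ** \<Gamma> ** outer u u)) *\<^sub>R A
       + A ** Ki ** \<Gamma> ** outer u u ** \<Gamma> ** Ki ** A)"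
    (is "_ \<longleftrightarrow> ?L = ?R")
proof -
  have "lr *\<^sub>R ((A + \<Gamma>) ** X + X ** (A + \<Gamma>)) - lr\<^sup>2 *\<^sub>R ((A + \<Gamma>) ** X ** (A + \<Gamma>))
      - lr\<^sup>2 *\<^sub>R noise_cov A \<Gamma> u S X = lr *\<^sub>R (?L - ?R)"
    by (simp add: noise_cov_def Let_def Ki_def sgd_lyapunov_def power2_eq_square algebra_simps)
  then have "stationary_eq A \<Gamma> u lr S X \<longleftrightarrow> lr *\<^sub>R (?L - ?R) = 0"
    unfolding stationary_eq_def Let_def by (metis right_minus_eq)
  then show ?thesis
    using assms(2) by simp
qed

lemma expectation_quadratic_form:
  fixes M :: "(real^'n) measure" and A \<Sigma> :: "real^'n^'n" and m u :: "real^'n"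
  assumes M: "prob_space M"
    and int1: "\<And>i. integrable M (\<lambda>w. w$i)"
    and int2: "\<And>i j. integrable M (\<lambda>w. w$i * w$j)"
    and mean: "\<And>i. (\<integral>w. w$i \<partial>M) = m$i"
    and cov: "\<And>i j. (\<integral>w. (w$i - m$i) * (w$j - m$j) \<partial>M) = \<Sigma>$i$j"
  shows "(\<integral>w. (w - u) \<bullet> (A *v (w - u)) \<partial>M) = trace (A ** \<Sigma>) + (m - u) \<bullet> (A *v (m - u))"
proof -
  interpret prob_space M by (rule M)
  have shifted_eq: "(\<lambda>w::real^'n. (w$i - a) * (w$j - b))
      = (\<lambda>w. w$i * w$j - b * w$i - a * w$j + a * b)" for i j a b
    by (auto simp: algebra_simps)
  have shifted_integrable: "integrable M (\<lambda>w::real^'n. (w$i - a) * (w$j - b))" for i j a b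
    unfolding shifted_eq using int1 int2 by simp
  have shifted: "(\<integral>w. (w$i - a) * (w$j - b) \<partial>M) = (\<integral>w. w$i * w$j \<partial>M) - b * m$i - a * m$j + a * b"
    for i j a b
    unfolding shifted_eq using int1 int2 mean by (simp add: prob_space)
  have second_moment: "(\<integral>w. (w$i - u$i) * (w$j - u$j) \<partial>M) = \<Sigma>$i$j + (m$i - u$i) * (m$j - u$j)"
    for i j using shifted[of i "u$i" j "u$j"] shifted[of i "m$i" j "m$j"] cov[of i j]
    by (simp add: algebra_simps)
  have \<Sigma>_sym: "\<Sigma>$j$i = \<Sigma>$i$j" for i j
    using cov[of i j] cov[of j i] by (simp add: mult.commute)
  have quad: "x \<bullet> (A *v x) = (\<Sum>i\<in>UNIV. \<Sum>j\<in>UNIV. A$i$j * (x$i * x$j))" for x :: "real^'n"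
    by (simp add: inner_vec_def matrix_vector_mult_def sum_distrib_left mult_ac)
  have "(\<integral>w. (w - u) \<bullet> (A *v (w - u)) \<partial>M)
      = (\<Sum>i\<in>UNIV. \<Sum>j\<in>UNIV. A$i$j * (\<integral>w. (w$i - u$i) * (w$j - u$j) \<partial>M))"
    unfolding quad using shifted_integrable by (simp add: integral_sum)
  also have "\<dots> = (\<Sum>i\<in>UNIV. \<Sum>j\<in>UNIV. A$i$j * \<Sigma>$i$j) + (m - u) \<bullet> (A *v (m - u))"
    unfolding second_moment quad by (simp add: distrib_left sum.distrib)
  also have "(\<Sum>i\<in>UNIV. \<Sum>j\<in>UNIV. A$i$j * \<Sigma>$i$j) = trace (A ** \<Sigma>)"
    by (simp add: trace_def matrix_matrix_mult_def \<Sigma>_sym)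
  finally show ?thesis .
qed

lemma linear_fixed_point:
  fixes x c t T R :: real
  assumes "x = c * ((x + t) * T + R)" and "1 - c * T \<noteq> 0"
  shows "x = c * (t * (T / (1 - c * T)) + R / (1 - c * T))"
proof -
  have "x * (1 - c * T) = c * (t * T + R)"
    using assms(1) by (simp add: algebra_simps)
  with assms(2) have "x = c * (t * T + R) / (1 - c * T)"
    by (simp add: eq_divide_eq)
  then show ?thesis
    by (simp add: add_divide_distrib[symmetric])
qed

locale commuting_ridge =
  fixes A \<Gamma> K G :: "real^'n^'n" and u :: "real^'n" and lr :: real and S :: nat
  assumes A_sym: "transpose A = A" and Gamma_sym: "transpose \<Gamma> = \<Gamma>"
    and A_Gamma: "matrix_commute A \<Gamma>"
    and K_eq: "K = A + \<Gamma>" and G_eq: "G = sgd_lyapunov_factor K A lr S"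
    and K_invertible: "invertible K" and G_invertible: "invertible G"
begin

lemma commute_K_G:
  assumes "matrix_commute Y A" "matrix_commute Y \<Gamma>"
  shows "matrix_commute Y K" "matrix_commute Y (matrix_inv K)"
    "matrix_commute Y G" "matrix_commute Y (matrix_inv G)"
proof -
  show YK: "matrix_commute Y K"
    unfolding K_eq by (intro matrix_commute_intros assms)
  show YKi: "matrix_commute Y (matrix_inv K)"
    by (intro matrix_commute_intros K_invertible YK)
  show YG: "matrix_commute Y G"
    unfolding G_eq sgd_lyapunov_factor_def by (intro matrix_commute_intros YK YKi assms)
  show "matrix_commute Y (matrix_inv G)"
    by (intro matrix_commute_intros G_invertible YG)
qed

lemmas A_commute = commute_K_G[OF matrix_commute_refl A_Gamma]
lemmas Gamma_commute = commute_K_G[OF matrix_commute_sym[OF A_Gamma] matrix_commute_refl]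

lemma Ki_Gi_commute: "matrix_commute (matrix_inv K) (matrix_inv G)"
  by (intro commute_K_G; rule matrix_commute_sym; simp add: A_commute Gamma_commute)

(* Each commutation is oriented so that rewriting sorts products of A, Gamma, K^-1, G^-1 (and U
   below) into this order; with left-association this normalizes such products. *)
lemmas commute_reorder = matrix_mul_assoc
  matrix_commute_rewrites[OF A_Gamma] matrix_commute_rewrites[OF A_commute(2)]
  matrix_commute_rewrites[OF A_commute(4)] matrix_commute_rewrites[OF Gamma_commute(2)]
  matrix_commute_rewrites[OF Gamma_commute(4)] matrix_commute_rewrites[OF Ki_Gi_commute]

lemma K_sym: "transpose K = K"
  by (simp add: K_eq transpose_add A_sym Gamma_sym)

lemma Ki_sym: "transpose (matrix_inv K) = matrix_inv K"
  by (simp add: K_sym K_invertible flip: matrix_inv_transpose)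

lemma G_sym: "transpose G = G"
proof -
  have "matrix_commute (matrix_inv K) (A ** A)"
    by (intro matrix_commute_intros matrix_commute_sym[OF A_commute(2)])
  then have "transpose (matrix_inv K ** (A ** A)) = matrix_inv K ** (A ** A)"
    by (rule symmetric_mult_commute) (simp_all add: Ki_sym matrix_transpose_mul A_sym)
  then show ?thesis
    by (simp add: G_eq sgd_lyapunov_factor_def transpose_add transpose_diff transpose_scalar
        K_sym matrix_mul_assoc)
qed

lemma Gi_sym: "transpose (matrix_inv G) = matrix_inv G"
  by (simp add: G_sym G_invertible flip: matrix_inv_transpose)

lemma sgd_lyapunov_A_Ki_Gi: "sgd_lyapunov K A lr S (A ** matrix_inv K ** matrix_inv G) = A"
  using sgd_lyapunov_commuting_solution[OF K_invertible _ A_commute(1)]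
    G_invertible A_commute(1) matrix_commute_refl G_eq by metis

lemma trace_A_stationary:
  assumes "lr \<noteq> 0" and "stationary_eq A \<Gamma> u lr S X"
  shows "trace (A ** X) = lr / real S *
    ((trace (A ** X) + trace (A ** matrix_inv K ** matrix_inv K ** \<Gamma> ** \<Gamma> ** outer u u))
       * trace (A ** A ** matrix_inv K ** matrix_inv G)
     + trace (A ** A ** A ** matrix_inv K ** matrix_inv K ** matrix_inv K
              ** \<Gamma> ** \<Gamma> ** matrix_inv G ** outer u u))"
proof -
  let ?M = "A ** matrix_inv K ** matrix_inv G"
  let ?W = "A ** matrix_inv K ** \<Gamma> ** outer u u ** \<Gamma> ** matrix_inv K ** A"
  have LX: "sgd_lyapunov K A lr S X = (lr / real S) *\<^sub>R
      ((trace (A ** X) + trace (A ** matrix_inv K ** matrix_inv K ** \<Gamma> ** \<Gamma> ** outer u u)) *\<^sub>R A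
       + ?W)"
    using assms stationary_eq_iff_sgd_lyapunov[of lr A \<Gamma> u S X] by (simp flip: K_eq)
  have MA: "trace (?M ** A) = trace (A ** A ** matrix_inv K ** matrix_inv G)"
    by (simp add: commute_reorder)
  have "trace (?M ** ?W) = trace ((A ** matrix_inv K ** matrix_inv G ** A ** matrix_inv K ** \<Gamma>
      ** outer u u) ** (\<Gamma> ** matrix_inv K ** A))"
    by (simp only: matrix_mul_assoc)
  also have "\<dots> = trace ((\<Gamma> ** matrix_inv K ** A) **
      (A ** matrix_inv K ** matrix_inv G ** A ** matrix_inv K ** \<Gamma> ** outer u u))"
    by (rule trace_mul_sym)
  also have "\<dots> = trace (A ** A ** A ** matrix_inv K ** matrix_inv K ** matrix_inv K
              ** \<Gamma> ** \<Gamma> ** matrix_inv G ** outer u u)"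
    by (simp add: commute_reorder)
  finally have MW: "trace (?M ** ?W) = \<dots>" .
  have "trace (A ** X) = trace (sgd_lyapunov K A lr S ?M ** X)"
    by (simp only: sgd_lyapunov_A_Ki_Gi)
  also have "\<dots> = trace (?M ** sgd_lyapunov K A lr S X)"
    by (rule trace_sgd_lyapunov_adjoint)
  also have "\<dots> = lr / real S *
      ((trace (A ** X) + trace (A ** matrix_inv K ** matrix_inv K ** \<Gamma> ** \<Gamma> ** outer u u))
         * trace (?M ** A) + trace (?M ** ?W))"
    unfolding LX by (simp add: matrix_mult_distribs trace_add trace_scaleR)
  finally show ?thesis
    unfolding MA MW .
qed

lemma mean_excess_loss:
  "(matrix_inv K *v (A *v u) - u) \<bullet> (A *v (matrix_inv K *v (A *v u) - u))
     = trace (A ** matrix_inv K ** matrix_inv K ** \<Gamma> ** \<Gamma> ** outer u u)"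
proof -
  have "K *v u = A *v u + \<Gamma> *v u"
    by (simp add: K_eq matrix_vector_mult_add_rdistrib)
  then have "u = matrix_inv K *v (A *v u) + matrix_inv K *v (\<Gamma> *v u)"
    by (metis matrix_vector_mul_assoc matrix_inv_left K_invertible matrix_vector_mul_lid
        matrix_vector_right_distrib)
  then have "matrix_inv K *v (A *v u) - u = - (matrix_inv K *v (\<Gamma> *v u))"
    by (metis add_diff_cancel_left' minus_diff_eq)
  then have "(matrix_inv K *v (A *v u) - u) \<bullet> (A *v (matrix_inv K *v (A *v u) - u))
      = (matrix_inv K *v (\<Gamma> *v u)) \<bullet> (A *v (matrix_inv K *v (\<Gamma> *v u)))"
    by (simp add: linear_neg[OF matrix_vector_mul_linear])
  also have "\<dots> = u \<bullet> ((\<Gamma> ** matrix_inv K ** A ** matrix_inv K ** \<Gamma>) *v u)"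
    by (simp add: inner_matrix_vector_transpose matrix_transpose_mul Ki_sym Gamma_sym
        matrix_vector_mul_assoc matrix_mul_assoc)
  also have "\<dots> = trace (A ** matrix_inv K ** matrix_inv K ** \<Gamma> ** \<Gamma> ** outer u u)"
    by (simp add: trace_mult_outer commute_reorder)
  finally show ?thesis .
qed

end

locale commuting_ridge_outer = commuting_ridge +
  assumes A_outer: "matrix_commute A (outer u u)"
    and Gamma_outer: "matrix_commute \<Gamma> (outer u u)"
begin

lemmas outer_commute =
  commute_K_G[OF matrix_commute_sym[OF A_outer] matrix_commute_sym[OF Gamma_outer]]

lemmas commute_reorder_outer = commute_reorder matrix_commute_rewrites[OF A_outer]
  matrix_commute_rewrites[OF Gamma_outer]
  matrix_commute_rewrites[OF matrix_commute_sym[OF outer_commute(2)]]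
  matrix_commute_rewrites[OF matrix_commute_sym[OF outer_commute(4)]]

lemma stationary_candidate:
  fixes x :: real
  defines "Y \<equiv> (lr / real S) *\<^sub>R
    ((x + trace (A ** matrix_inv K ** matrix_inv K ** \<Gamma> ** \<Gamma> ** outer u u)) *\<^sub>R A
     + A ** A ** matrix_inv K ** matrix_inv K ** \<Gamma> ** \<Gamma> ** outer u u)"
  assumes "lr \<noteq> 0"
    and x_fix: "x = lr / real S *
    ((x + trace (A ** matrix_inv K ** matrix_inv K ** \<Gamma> ** \<Gamma> ** outer u u))
       * trace (A ** A ** matrix_inv K ** matrix_inv G)
     + trace (A ** A ** A ** matrix_inv K ** matrix_inv K ** matrix_inv K
              ** \<Gamma> ** \<Gamma> ** matrix_inv G ** outer u u))"
  shows "transpose (Y ** matrix_inv K ** matrix_inv G) = Y ** matrix_inv K ** matrix_inv G"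
    and "stationary_eq A \<Gamma> u lr S (Y ** matrix_inv K ** matrix_inv G)"
proof -
  have "matrix_commute A Y" "matrix_commute \<Gamma> Y"
    unfolding Y_def by (intro matrix_commute_intros A_Gamma matrix_commute_sym[OF A_Gamma]
        A_commute Gamma_commute A_outer Gamma_outer)+
  then have LY: "sgd_lyapunov K A lr S (Y ** matrix_inv K ** matrix_inv G) = Y"
    using sgd_lyapunov_commuting_solution[OF K_invertible _ A_commute(1)] G_invertible
      commute_K_G(1) matrix_commute_sym G_eq by metis
  have "trace (A ** (Y ** matrix_inv K ** matrix_inv G)) = x"
    by (subst x_fix) (simp add: Y_def matrix_mult_distribs trace_add trace_scaleR commute_reorder_outer
        algebra_simps)
  moreover have "A ** matrix_inv K ** \<Gamma> ** outer u u ** \<Gamma> ** matrix_inv K ** A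
      = A ** A ** matrix_inv K ** matrix_inv K ** \<Gamma> ** \<Gamma> ** outer u u"
    by (simp add: commute_reorder_outer)
  ultimately show "stationary_eq A \<Gamma> u lr S (Y ** matrix_inv K ** matrix_inv G)"
    using assms(2) LY by (simp add: stationary_eq_iff_sgd_lyapunov Y_def flip: K_eq)
  show "transpose (Y ** matrix_inv K ** matrix_inv G) = Y ** matrix_inv K ** matrix_inv G"
    by (simp add: Y_def matrix_transpose_mul transpose_add transpose_scalar transpose_outer
        A_sym Gamma_sym Ki_sym Gi_sym matrix_mult_distribs commute_reorder_outer)
qed

end

theorem theorem3:
  fixes A \<Gamma> \<Sigma> :: "real^'n^'n" and u :: "real^'n" and lr :: real and S :: nat
    and M :: "(real^'n) measure"
  defines "K \<equiv> A + \<Gamma>"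
  defines "U \<equiv> outer u u"
  defines "G \<equiv> 2 *\<^sub>R mat 1 - lr *\<^sub>R (K + (1 / real S) *\<^sub>R (matrix_inv K ** A ** A))"
  defines "T \<equiv> trace (A ** A ** matrix_inv K ** matrix_inv G)"
  defines "\<kappa> \<equiv> T / (1 - lr / real S * T)"
  defines "r \<equiv> trace (A ** A ** A ** matrix_inv K ** matrix_inv K ** matrix_inv K
                        ** \<Gamma> ** \<Gamma> ** matrix_inv G ** U) / (1 - lr / real S * T)"
  defines "t \<equiv> trace (A ** matrix_inv K ** matrix_inv K ** \<Gamma> ** \<Gamma> ** U)"
  defines "wstar \<equiv> matrix_inv K *v (A *v u)"
  assumes A_sym: "transpose A = A"
    and A_pd: "\<And>x. x \<noteq> 0 \<Longrightarrow> x \<bullet> (A *v x) > 0"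
    and Gamma_sym: "transpose \<Gamma> = \<Gamma>"
    and comm_AG: "A ** \<Gamma> = \<Gamma> ** A"
    and lr_pos: "lr > 0"
    and S_pos: "S \<ge> 1"
    and K_inv: "invertible K"
    and G_inv: "invertible G"
    and denom: "1 - lr / real S * T \<noteq> 0"
    \<comment> \<open>Sigma is the covariance determined by the stationarity equation\<close>
    and Sigma_sym: "transpose \<Sigma> = \<Sigma>"
    and Sigma_eq: "stationary_eq A \<Gamma> u lr S \<Sigma>"
    and Sigma_unique: "\<And>X. transpose X = X \<Longrightarrow> stationary_eq A \<Gamma> u lr S X \<Longrightarrow> X = \<Sigma>"
    \<comment> \<open>M is the stationary distribution of w: mean wstar, covariance Sigma\<close>
    and M_prob: "prob_space M"
    and int1: "\<And>i. integrable M (\<lambda>w. w$i)"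
    and int2: "\<And>i j. integrable M (\<lambda>w. w$i * w$j)"
    and mean: "\<And>i. (\<integral>w. w$i \<partial>M) = wstar$i"
    and cov: "\<And>i j. (\<integral>w. (w$i - wstar$i) * (w$j - wstar$j) \<partial>M) = \<Sigma>$i$j"
  shows "(1/2) * (\<integral>w. (w - u) \<bullet> (A *v (w - u)) \<partial>M)
           = lr / (2 * real S) * (t * \<kappa> + r) + (1/2) * t
       \<and> (A ** U = U ** A \<and> \<Gamma> ** U = U ** \<Gamma> \<longrightarrow>
         \<Sigma> = (lr / real S * t * (1 + lr * \<kappa> / real S)) *\<^sub>R (A ** matrix_inv K ** matrix_inv G)
             + (lr / real S) *\<^sub>R ((A ** A ** matrix_inv K ** matrix_inv K ** \<Gamma> ** \<Gamma> ** U
                                    + (lr * r / real S) *\<^sub>R A) ** matrix_inv K ** matrix_inv G))"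
proof -
  interpret commuting_ridge A \<Gamma> K G u lr S
    using A_sym Gamma_sym comm_AG K_inv G_inv
    by unfold_locales (simp_all add: K_def G_def sgd_lyapunov_factor_def matrix_commute_def)
  define x where "x = trace (A ** \<Sigma>)"
  define R where "R = trace (A ** A ** A ** matrix_inv K ** matrix_inv K ** matrix_inv K
    ** \<Gamma> ** \<Gamma> ** matrix_inv G ** U)"
  have x_fix: "x = lr / real S * ((x + t) * T + R)"
    using trace_A_stationary[OF _ Sigma_eq] lr_pos by (simp add: x_def t_def T_def R_def U_def)
  have x_val: "x = lr / real S * (t * \<kappa> + r)"
    using linear_fixed_point[OF x_fix denom] by (simp add: \<kappa>_def r_def R_def)
  have loss: "(\<integral>w. (w - u) \<bullet> (A *v (w - u)) \<partial>M) = x + t"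
    using expectation_quadratic_form[OF M_prob int1 int2 mean cov] mean_excess_loss
    by (simp add: x_def t_def wstar_def U_def)
  show ?thesis
  proof (intro conjI impI)
    show "(1/2) * (\<integral>w. (w - u) \<bullet> (A *v (w - u)) \<partial>M) = lr / (2 * real S) * (t * \<kappa> + r) + (1/2) * t"
      using x_val by (simp add: loss)
  next
    assume "A ** U = U ** A \<and> \<Gamma> ** U = U ** \<Gamma>"
    then interpret commuting_ridge_outer A \<Gamma> K G u lr S
      by unfold_locales (simp_all add: matrix_commute_def U_def)
    have "\<Sigma> = (lr / real S) *\<^sub>R ((x + t) *\<^sub>R A
        + A ** A ** matrix_inv K ** matrix_inv K ** \<Gamma> ** \<Gamma> ** U) ** matrix_inv K ** matrix_inv G"
      using stationary_candidate[of x] x_fix lr_pos Sigma_unique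
      by (simp add: t_def T_def R_def U_def)
    then show "\<Sigma> = (lr / real S * t * (1 + lr * \<kappa> / real S)) *\<^sub>R (A ** matrix_inv K ** matrix_inv G)
             + (lr / real S) *\<^sub>R ((A ** A ** matrix_inv K ** matrix_inv K ** \<Gamma> ** \<Gamma> ** U
                                    + (lr * r / real S) *\<^sub>R A) ** matrix_inv K ** matrix_inv G)"
      using x_val by (simp add: matrix_mult_distribs algebra_simps)
  qed
qed

end
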